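(* Let $L_0=\partial_x^r+\sum_{i=0}^{r-2}f_i\partial_x^i$ with $f_i$ formal functions of $x$. For every integer $a\ge1$, $$ \Big(\widehat{L_0^{\frac ar}}\Big)_1=\frac{a(a-r)}{2r^2}\,\widehat L_0^{\frac ar-2}\,\partial_z\widehat L_0\,\partial_x\widehat L_0 \;=\;\frac{a}{2r}\,\partial_z\big(\widehat L_0^{\frac ar-1}\big)\,\partial_x\widehat L_0 . $$
   Context: Fix $r\ge2$. Pseudo-differential operators in $\partial_x$ multiply via $\partial_x^k\circ f=\sum_{l\ge0}\binom kl f^{(l)}\partial_x^{k-l}$; $L_0^{a/r}$ denotes the $a$-th power of the unique $r$-th root $L_0^{1/r}=\partial_x+\sum_{n\ge0}\tilde a_n\partial_x^{-n}$. The symbol of an operator $\sum a_n\partial_x^n$ is $\sum a_nz^n$. $\widehat L_0=z^r+\sum f_iz^i$, and $\widehat L_0^{q}$ denotes the power of this Laurent series, $z^{rq}(1+z^{-r}\sum f_iz^i)^q$. The coefficients of the symbol $\widehat{L_0^{a/r}}=\sum_{i\le a}P_iz^i$ are universal polynomials $P_i$ in the derivatives $f_j^{(k)}=\partial_x^kf_j$; assigning $f_j^{(k)}$ differential degree $k$, $\big(\widehat{L_0^{a/r}}\big)_1$ denotes $\sum_i P_{i,1}z^i$, where $P_{i,1}$ is the part of $P_i$ of differential degree exactly $1$. *)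

theory Defs
  imports Complex_Main "HOL-Library.Poly_Mapping"
begin

text \<open>Variables (j,k) stand for f_j^{(k)}, the k-th x-derivative of f_j.\<close>

type_synonym monom = "(nat \<times> nat, nat) poly_mapping"
type_synonym dpoly = "(monom, rat) poly_mapping"

definition rconst :: "rat \<Rightarrow> dpoly" where
  "rconst c = Poly_Mapping.single 0 c"

definition fvar :: "nat \<Rightarrow> nat \<Rightarrow> dpoly" where
  "fvar j k = Poly_Mapping.single (Poly_Mapping.single (j, k) 1) 1"

text \<open>The total derivation d/dx: f_j^{(k)} maps to f_j^{(k+1)}, extended by Leibniz.\<close>
definition dx :: "dpoly \<Rightarrow> dpoly" where
  "dx p = (\<Sum>m\<in>Poly_Mapping.keys p. \<Sum>v\<in>Poly_Mapping.keys (m :: monom).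
     Poly_Mapping.single
       (m - Poly_Mapping.single v 1 + Poly_Mapping.single (fst v, Suc (snd v)) 1)
       (Poly_Mapping.lookup p m * of_nat (Poly_Mapping.lookup m v)))"

definition ddeg :: "monom \<Rightarrow> nat" where
  "ddeg m = (\<Sum>v\<in>Poly_Mapping.keys m. Poly_Mapping.lookup m v * snd v)"

definition deg1 :: "dpoly \<Rightarrow> dpoly" where
  "deg1 p = (\<Sum>m\<in>{m\<in>Poly_Mapping.keys p. ddeg m = 1}. Poly_Mapping.single m (Poly_Mapping.lookup p m))"

text \<open>A function A :: int \<Rightarrow> dpoly represents both sum_n A n \<partial>_x^n and its
  symbol sum_n A n z^n; all objects considered have coefficients vanishing
  above some degree.\<close>

definition ub :: "(int \<Rightarrow> dpoly) \<Rightarrow> int" where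
  "ub A = (SOME N. \<forall>n>N. A n = 0)"

definition lmult :: "(int \<Rightarrow> dpoly) \<Rightarrow> (int \<Rightarrow> dpoly) \<Rightarrow> int \<Rightarrow> dpoly" where
  "lmult A B n = (\<Sum>k\<in>{n - ub B..ub A}. A k * B (n - k))"

definition lone :: "int \<Rightarrow> dpoly" where
  "lone n = (if n = 0 then 1 else 0)"

fun lpow :: "(int \<Rightarrow> dpoly) \<Rightarrow> nat \<Rightarrow> int \<Rightarrow> dpoly" where
  "lpow A 0 = lone"
| "lpow A (Suc k) = lmult (lpow A k) A"

definition smul :: "rat \<Rightarrow> (int \<Rightarrow> dpoly) \<Rightarrow> int \<Rightarrow> dpoly" where
  "smul c A n = rconst c * A n"

definition dz :: "(int \<Rightarrow> dpoly) \<Rightarrow> int \<Rightarrow> dpoly" where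
  "dz A n = of_int (n + 1) * A (n + 1)"

definition dxs :: "(int \<Rightarrow> dpoly) \<Rightarrow> int \<Rightarrow> dpoly" where
  "dxs A n = dx (A n)"

text \<open>Composition of pseudo-differential operators:
  (a \<partial>^k)(b \<partial>^l) = sum_{m\<ge>0} binom(k,m) a b^{(m)} \<partial>^{k+l-m}.\<close>
definition pdo_mult :: "(int \<Rightarrow> dpoly) \<Rightarrow> (int \<Rightarrow> dpoly) \<Rightarrow> int \<Rightarrow> dpoly" where
  "pdo_mult P Q n = (\<Sum>k\<in>{n - ub Q..ub P}. \<Sum>l\<in>{n - k..ub Q}.
      rconst ((of_int k :: rat) gchoose (nat (k + l - n))) * P k
        * (dx ^^ nat (k + l - n)) (Q l))"

fun pdo_pow :: "(int \<Rightarrow> dpoly) \<Rightarrow> nat \<Rightarrow> int \<Rightarrow> dpoly" where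
  "pdo_pow P 0 = lone"
| "pdo_pow P (Suc k) = pdo_mult (pdo_pow P k) P"

definition pdo_root :: "nat \<Rightarrow> (int \<Rightarrow> dpoly) \<Rightarrow> int \<Rightarrow> dpoly" where
  "pdo_root r L = (THE Q. Q 1 = 1 \<and> (\<forall>n>1. Q n = 0) \<and> pdo_pow Q r = L)"

definition L0 :: "nat \<Rightarrow> int \<Rightarrow> dpoly" where
  "L0 r n = (if n = int r then 1
             else if 0 \<le> n \<and> n \<le> int r - 2 then fvar (nat n) 0 else 0)"

text \<open>For a series L = z^r (1 + u) with u of degree \<le> -1 and q rational with r q
  an integer: L^q = z^{rq} sum_k binom(q,k) u^k.\<close>
definition lau_rpow :: "nat \<Rightarrow> rat \<Rightarrow> (int \<Rightarrow> dpoly) \<Rightarrow> int \<Rightarrow> dpoly" where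
  "lau_rpow r q L n =
     (let u = (\<lambda>m. L (m + int r) - lone m);
          e = \<lfloor>q * of_nat r\<rfloor>;
          t = n - e
      in if t > 0 then 0
         else (\<Sum>k\<in>{0..nat (- t)}. rconst (q gchoose k) * lpow u k t))"

end

theory Submission
  imports Defs "HOL-Library.Product_Lexorder" "HOL-Computational_Algebra.Formal_Laurent_Series"
begin

text \<open>Split every coefficient into its homogeneous parts of differential degree 0 and 1.
  In a composition \<open>P \<circ> R\<close> of pseudo-differential operators the degree-0 parts simply multiply
  as symbols, while the degree-1 part of the product is the symbol product of the degree-0 and
  degree-1 parts plus \<open>\<partial>\<^sub>zP\<^sub>0 \<partial>\<^sub>xR\<^sub>0\<close>, coming from the only term of the composition rule that
  carries a single derivative. Hence the degree-0 part of the operator root \<open>Q\<close> is the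
  Laurent series root \<open>\<Lambda> = L\<^sub>0\<^bsup>1/r\<^esup>\<close> of the symbol, and the degree-1 parts \<open>Y\<^sub>j\<close> of \<open>Q\<^sup>j\<close> satisfy
  \<open>Y\<^sub>j = j \<Lambda>\<^bsup>j-1\<^esup> Y\<^sub>1 + (j choose 2) \<Lambda>\<^bsup>j-2\<^esup> \<partial>\<^sub>z\<Lambda> \<partial>\<^sub>x\<Lambda>\<close>. As \<open>Q\<^sup>r = L\<^sub>0\<close> has no degree-1 part,
  \<open>Y\<^sub>r = 0\<close> determines \<open>Y\<^sub>1\<close>, giving \<open>Y\<^sub>a = a(a-r)/2 \<Lambda>\<^bsup>a-2\<^esup> \<partial>\<^sub>z\<Lambda> \<partial>\<^sub>x\<Lambda>\<close>. Both right-hand sides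
  reduce to this by the chain rule \<open>D \<Lambda>\<^sup>e = e \<Lambda>\<^bsup>e-1\<^esup> D \<Lambda>\<close> for the derivations \<open>\<partial>\<^sub>z\<close>, \<open>\<partial>\<^sub>x\<close>.\<close>

(* Product_Lexorder orders the variables (j, k); this makes dpoly an integral domain. *)

abbreviation single where "single \<equiv> Poly_Mapping.single"
abbreviation lookup where "lookup \<equiv> Poly_Mapping.lookup"
abbreviation keys where "keys \<equiv> Poly_Mapping.keys"

section \<open>Differential polynomials\<close>

lemma poly_mapping_sum_single:
  assumes "finite K" "keys p \<subseteq> K"
  shows "(p::'a \<Rightarrow>\<^sub>0 'b::comm_monoid_add) = (\<Sum>m\<in>K. single m (lookup p m))"
proof (rule poly_mapping_eqI)
  fix k
  have "lookup (\<Sum>m\<in>K. single m (lookup p m)) k = (\<Sum>m\<in>K. lookup p m when m = k)"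
    by (simp add: lookup_sum lookup_single)
  also have "\<dots> = lookup p k"
    using assms by (cases "k \<in> K") (auto simp: when_def in_keys_iff)
  finally show "lookup p k = lookup (\<Sum>m\<in>K. single m (lookup p m)) k" by simp
qed

lemma poly_mapping_sum_keys:
  "(p::'a \<Rightarrow>\<^sub>0 'b::comm_monoid_add) = (\<Sum>m\<in>keys p. single m (lookup p m))"
  by (rule poly_mapping_sum_single) auto

lemma dpoly_mult_sum_keys:
  "(p::dpoly) * q = (\<Sum>a\<in>keys p. \<Sum>b\<in>keys q. single a (lookup p a) * single b (lookup q b))"
  by (subst (1) poly_mapping_sum_keys, subst (2) poly_mapping_sum_keys)
     (simp add: sum_distrib_left sum_distrib_right sum.swap[of _ "keys q"])

lemma rconst_add: "rconst (a + b) = rconst a + rconst b"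
  by (simp add: rconst_def single_add)

lemma rconst_mult: "rconst a * rconst b = rconst (a * b)"
  by (simp add: rconst_def mult_single)

lemma rconst_one [simp]: "rconst 1 = 1"
  by (simp add: rconst_def)

lemma rconst_zero [simp]: "rconst 0 = 0"
  by (simp add: rconst_def)

lemma rconst_sum: "rconst (sum f A) = (\<Sum>x\<in>A. rconst (f x))"
  by (induction A rule: infinite_finite_induct) (auto simp: rconst_add)

lemma of_int_dpoly: "(of_int k :: dpoly) = rconst (of_int k)"
  by (simp add: rconst_def)

lemma of_nat_dpoly: "(of_nat n :: dpoly) = rconst (of_nat n)"
  by (simp add: rconst_def)

lemma ddeg_superset:
  "finite V \<Longrightarrow> keys m \<subseteq> V \<Longrightarrow> ddeg m = (\<Sum>v\<in>V. lookup m v * snd v)"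
  unfolding ddeg_def by (rule sum.mono_neutral_left) (auto simp: in_keys_iff)

lemma ddeg_add: "ddeg (a + b) = ddeg a + ddeg b"
proof -
  let ?V = "keys a \<union> keys b"
  have "ddeg (a + b) = (\<Sum>v\<in>?V. lookup (a + b) v * snd v)"
    using keys_add[of a b] by (intro ddeg_superset) auto
  also have "\<dots> = ddeg a + ddeg b"
    using ddeg_superset[of ?V a] ddeg_superset[of ?V b]
    by (simp add: lookup_add sum.distrib algebra_simps)
  finally show ?thesis .
qed

lemma ddeg_zero [simp]: "ddeg 0 = 0"
  by (simp add: ddeg_def)

lemma ddeg_single: "ddeg (single v n) = n * snd v"
  by (simp add: ddeg_def)

definition dpart :: "nat \<Rightarrow> dpoly \<Rightarrow> dpoly" where
  "dpart d p = (\<Sum>m\<in>{m\<in>keys p. ddeg m = d}. single m (lookup p m))"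

lemma deg1_eq_dpart: "deg1 = dpart 1"
  by (simp add: fun_eq_iff deg1_def dpart_def)

lemma lookup_dpart: "lookup (dpart d p) m = (if ddeg m = d then lookup p m else 0)"
proof -
  have "lookup (dpart d p) m = (\<Sum>m'\<in>{m'\<in>keys p. ddeg m' = d}. lookup p m' when m' = m)"
    by (simp add: dpart_def lookup_sum lookup_single)
  also have "\<dots> = (if ddeg m = d then lookup p m else 0)"
    by (cases "m \<in> keys p") (auto simp: when_def in_keys_iff)
  finally show ?thesis .
qed

lemma dpart_add: "dpart d (p + q) = dpart d p + dpart d q"
  by (rule poly_mapping_eqI) (simp add: lookup_dpart lookup_add)

lemma dpart_zero [simp]: "dpart d 0 = 0"
  by (rule poly_mapping_eqI) (simp add: lookup_dpart)

lemma dpart_sum: "dpart d (sum f A) = (\<Sum>x\<in>A. dpart d (f x))"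
  by (induction A rule: infinite_finite_induct) (auto simp: dpart_add)

lemma dpart_single: "dpart d (single m c) = (if ddeg m = d then single m c else 0)"
  by (rule poly_mapping_eqI) (auto simp: lookup_dpart lookup_single when_def)

lemma dpart_sum_keys: "dpart d p = (\<Sum>a\<in>keys p. if ddeg a = d then single a (lookup p a) else 0)"
proof -
  have "dpart d p = dpart d (\<Sum>a\<in>keys p. single a (lookup p a))"
    by (simp only: poly_mapping_sum_keys[of p, symmetric])
  then show ?thesis
    by (simp add: dpart_sum dpart_single)
qed

lemma dpart_mult: "dpart d (p * q) = (\<Sum>i\<le>d. dpart i p * dpart (d - i) q)"
proof -
  let ?part = "\<lambda>i a (x::rat). if ddeg a = i then single a x else 0"
  have monomial: "dpart d (single a x * single b y) = (\<Sum>i\<le>d. ?part i a x * ?part (d - i) b y)"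
    for a b x y
  proof (cases "ddeg a \<le> d")
    case True
    have "(\<Sum>i\<le>d. ?part i a x * ?part (d - i) b y)
        = (\<Sum>i\<le>d. if i = ddeg a then (if ddeg b = d - i then single (a + b) (x * y) else 0) else 0)"
      by (intro sum.cong) (auto simp: mult_single)
    then show ?thesis
      using True by (simp add: sum.delta' mult_single dpart_single ddeg_add) arith
  qed (auto simp: mult_single dpart_single ddeg_add intro!: sum.neutral[symmetric])
  have "dpart d (p * q) = (\<Sum>a\<in>keys p. \<Sum>b\<in>keys q. \<Sum>i\<le>d.
      ?part i a (lookup p a) * ?part (d - i) b (lookup q b))"
    by (simp only: dpoly_mult_sum_keys[of p q] dpart_sum monomial)
  also have "\<dots> = (\<Sum>i\<le>d. (\<Sum>a\<in>keys p. ?part i a (lookup p a)) * (\<Sum>b\<in>keys q. ?part (d - i) b (lookup q b)))"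
    by (simp add: sum_distrib_left sum_distrib_right sum.swap[of _ "{..d}"])
       (rule sum.cong[OF refl], rule sum.swap)
  also have "\<dots> = (\<Sum>i\<le>d. dpart i p * dpart (d - i) q)"
    by (simp only: dpart_sum_keys)
  finally show ?thesis .
qed

lemma dpart0_mult: "dpart 0 (p * q) = dpart 0 p * dpart 0 q"
  using dpart_mult[of 0 p q] by simp

lemma dpart1_mult: "dpart 1 (p * q) = dpart 0 p * dpart 1 q + dpart 1 p * dpart 0 q"
  using dpart_mult[of 1 p q] by (simp add: atMost_Suc add.commute)

lemma dpart_rconst: "dpart d (rconst c) = (if d = 0 then rconst c else 0)"
  by (simp add: rconst_def dpart_single)

lemma dpart_one: "dpart d 1 = (if d = 0 then 1 else 0)"
  using dpart_rconst[of d 1] by simp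

lemma dpart_rconst_mult: "dpart d (rconst c * p) = rconst c * dpart d p"
proof (cases d)
  case (Suc d')
  show ?thesis
    unfolding dpart_mult by (subst sum.atMost_shift) (simp add: dpart_rconst Suc)
qed (simp add: dpart0_mult dpart_rconst)

lemma dpart_fvar0: "dpart d (fvar j 0) = (if d = 0 then fvar j 0 else 0)"
  by (simp add: fvar_def dpart_single ddeg_single)

definition monom_deriv :: "monom \<Rightarrow> nat \<times> nat \<Rightarrow> monom" where
  "monom_deriv m v = m - single v 1 + single (fst v, Suc (snd v)) 1"

lemma dx_superset:
  assumes "finite K" "keys p \<subseteq> K"
  shows "dx p = (\<Sum>m\<in>K. \<Sum>v\<in>keys m. single (monom_deriv m v) (lookup p m * of_nat (lookup m v)))"
  unfolding dx_def monom_deriv_def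
  by (rule sum.mono_neutral_left[OF assms]) (auto simp: in_keys_iff)

lemma dx_add: "dx (p + q) = dx p + dx q"
proof -
  let ?K = "keys p \<union> keys q"
  have "dx (p + q) = (\<Sum>m\<in>?K. \<Sum>v\<in>keys m. single (monom_deriv m v) (lookup (p + q) m * of_nat (lookup m v)))"
    using keys_add[of p q] by (intro dx_superset) auto
  also have "\<dots> = dx p + dx q"
    using dx_superset[of ?K p] dx_superset[of ?K q]
    by (simp add: lookup_add distrib_right single_add sum.distrib)
  finally show ?thesis .
qed

lemma dx_zero [simp]: "dx 0 = 0"
  by (simp add: dx_def)

lemma dx_sum: "dx (sum f A) = (\<Sum>x\<in>A. dx (f x))"
  by (induction A rule: infinite_finite_induct) (auto simp: dx_add)

lemma dx_single_superset:
  assumes "finite V" "keys m \<subseteq> V"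
  shows "dx (single m c) = (\<Sum>v\<in>V. single (monom_deriv m v) (c * of_nat (lookup m v)))"
proof -
  have "dx (single m c) = (\<Sum>v\<in>keys m. single (monom_deriv m v) (c * of_nat (lookup m v)))"
    using dx_superset[of "{m}" "single m c"] by simp
  also have "\<dots> = (\<Sum>v\<in>V. single (monom_deriv m v) (c * of_nat (lookup m v)))"
    by (rule sum.mono_neutral_left[OF assms]) (auto simp: in_keys_iff)
  finally show ?thesis .
qed

lemma monom_deriv_add:
  assumes "v \<in> keys a"
  shows "monom_deriv a v + b = monom_deriv (a + b) v"
proof (rule poly_mapping_eqI)
  fix k
  have "lookup a v \<ge> 1"
    using assms by (simp add: in_keys_iff)
  then show "lookup (monom_deriv a v + b) k = lookup (monom_deriv (a + b) v) k"
    by (auto simp: monom_deriv_def lookup_add lookup_minus lookup_single when_def)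
qed

lemma dx_single_times_single:
  assumes "finite V" "keys a \<subseteq> V"
  shows "(\<Sum>v\<in>V. single (monom_deriv (a + b) v) (c * e * of_nat (lookup a v)))
       = dx (single a c) * single b e"
proof -
  have "single (monom_deriv (a + b) v) (c * e * of_nat (lookup a v))
      = single (monom_deriv a v) (c * of_nat (lookup a v)) * single b e" for v
  proof (cases "v \<in> keys a")
    case True
    then show ?thesis
      by (simp only: mult_single monom_deriv_add[OF True]) (simp add: mult_ac)
  qed (simp add: in_keys_iff)
  then show ?thesis
    using dx_single_superset[OF assms, of c] by (simp add: sum_distrib_right)
qed

lemma dx_single_mult:
  "dx (single a c * single b e) = dx (single a c) * single b e + single a c * dx (single b e)"
proof -
  let ?V = "keys a \<union> keys b"
  have V: "finite ?V" by simp
  have "dx (single a c * single b e) = (\<Sum>v\<in>?V. single (monom_deriv (a + b) v) (c * e * of_nat (lookup (a + b) v)))"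
    using keys_add[of a b] by (simp add: mult_single dx_single_superset)
  also have "\<dots> = (\<Sum>v\<in>?V. single (monom_deriv (a + b) v) (c * e * of_nat (lookup a v)))
      + (\<Sum>v\<in>?V. single (monom_deriv (b + a) v) (e * c * of_nat (lookup b v)))"
    by (simp add: lookup_add distrib_left single_add sum.distrib add.commute mult.commute)
  also have "\<dots> = dx (single a c) * single b e + dx (single b e) * single a c"
    by (simp only: dx_single_times_single[OF V Un_upper1] dx_single_times_single[OF V Un_upper2])
  also have "\<dots> = dx (single a c) * single b e + single a c * dx (single b e)"
    by (simp only: mult.commute[of "dx (single b e)"])
  finally show ?thesis .
qed

lemma dx_mult: "dx (p * q) = dx p * q + p * dx q"
proof -
  have "dx (p * q) = (\<Sum>a\<in>keys p. \<Sum>b\<in>keys q. dx (single a (lookup p a) * single b (lookup q b)))"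
    by (simp add: dpoly_mult_sum_keys[of p q] dx_sum)
  also have "\<dots> = dx (\<Sum>a\<in>keys p. single a (lookup p a)) * (\<Sum>b\<in>keys q. single b (lookup q b))
      + (\<Sum>a\<in>keys p. single a (lookup p a)) * dx (\<Sum>b\<in>keys q. single b (lookup q b))"
    by (simp add: dx_single_mult dx_sum sum.distrib sum_distrib_left sum_distrib_right
        sum.swap[of _ "keys q" "keys p"])
  also have "\<dots> = dx p * q + p * dx q"
    by (simp only: poly_mapping_sum_keys[of p, symmetric] poly_mapping_sum_keys[of q, symmetric])
  finally show ?thesis .
qed

lemma ddeg_monom_deriv:
  assumes "v \<in> keys m"
  shows "ddeg (monom_deriv m v) = Suc (ddeg m)"
proof -
  have "m - single v 1 + single v 1 = m"
  proof (rule poly_mapping_eqI)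
    fix k
    show "lookup (m - single v 1 + single v 1) k = lookup m k"
      using assms by (auto simp: lookup_add lookup_minus lookup_single when_def in_keys_iff)
  qed
  then have "ddeg m = ddeg (m - single v 1) + snd v"
    using ddeg_add[of "m - single v 1" "single v 1"] by (simp add: ddeg_single)
  then show ?thesis
    by (simp add: monom_deriv_def ddeg_add ddeg_single)
qed

lemma dpart_dx_single: "dpart k (dx (single m c)) = (if k = Suc (ddeg m) then dx (single m c) else 0)"
proof -
  have "dpart k (dx (single m c)) = (\<Sum>v\<in>keys m. if k = Suc (ddeg m)
      then single (monom_deriv m v) (c * of_nat (lookup m v)) else 0)"
    unfolding dx_single_superset[OF finite_keys order_refl] dpart_sum dpart_single
    by (intro sum.cong refl) (auto simp: ddeg_monom_deriv)
  then show ?thesis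
    by (simp add: dx_single_superset[OF finite_keys order_refl])
qed

lemma dpart_Suc_dx: "dpart (Suc d) (dx p) = dx (dpart d p)"
proof -
  have "dpart (Suc d) (dx p) = dpart (Suc d) (dx (\<Sum>a\<in>keys p. single a (lookup p a)))"
    by (simp only: poly_mapping_sum_keys[of p, symmetric])
  also have "\<dots> = (\<Sum>a\<in>keys p. if ddeg a = d then dx (single a (lookup p a)) else 0)"
    by (simp add: dx_sum dpart_sum dpart_dx_single eq_commute)
  also have "\<dots> = dx (dpart d p)"
    by (simp add: dpart_sum_keys dx_sum) (rule sum.cong, auto)
  finally show ?thesis .
qed

lemma dpart0_dx: "dpart 0 (dx p) = 0"
proof -
  have "dpart 0 (dx p) = dpart 0 (dx (\<Sum>a\<in>keys p. single a (lookup p a)))"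
    by (simp only: poly_mapping_sum_keys[of p, symmetric])
  then show ?thesis
    by (simp add: dx_sum dpart_sum dpart_dx_single)
qed

lemma dpart1_dx: "dpart 1 (dx p) = dx (dpart 0 p)"
  using dpart_Suc_dx[of 0] by simp

lemma dpart0_dx_funpow: "m > 0 \<Longrightarrow> dpart 0 ((dx ^^ m) p) = 0"
  by (cases m) (simp_all add: dpart0_dx)

lemma dpart1_dx_funpow:
  assumes "m > 1"
  shows "dpart 1 ((dx ^^ m) p) = 0"
proof -
  obtain k where "m = Suc (Suc k)"
    using assms by (metis less_imp_Suc_add plus_1_eq_Suc)
  then show ?thesis
    using dpart_Suc_dx[of 0 "dx ((dx ^^ k) p)"] by (simp add: dpart0_dx)
qed

section \<open>Series bounded above\<close>

definition vanishes_above :: "(int \<Rightarrow> 'a::zero) \<Rightarrow> int \<Rightarrow> bool" where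
  "vanishes_above A N \<longleftrightarrow> (\<forall>n>N. A n = 0)"

lemma vanishes_above_ub: "vanishes_above A N \<Longrightarrow> vanishes_above A (ub A)"
  unfolding ub_def vanishes_above_def by (rule someI_ex) blast

lemma convolution_sum_extend:
  fixes A B :: "int \<Rightarrow> 'a::semiring_0"
  assumes "vanishes_above A NA" "vanishes_above B NB" "NA \<le> NA'" "NB \<le> NB'"
  shows "(\<Sum>k\<in>{n - NB..NA}. A k * B (n - k)) = (\<Sum>k\<in>{n - NB'..NA'}. A k * B (n - k))"
proof (rule sum.mono_neutral_left)
  show "\<forall>k\<in>{n - NB'..NA'} - {n - NB..NA}. A k * B (n - k) = 0"
    using assms(1,2) by (auto simp: vanishes_above_def)
qed (use assms in auto)

lemma lmult_bounded:
  assumes "vanishes_above A NA" "vanishes_above B NB"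
  shows "lmult A B n = (\<Sum>k\<in>{n - NB..NA}. A k * B (n - k))"
  using convolution_sum_extend[OF vanishes_above_ub[OF assms(1)] vanishes_above_ub[OF assms(2)],
          of "max (ub A) NA" "max (ub B) NB" n]
        convolution_sum_extend[OF assms, of "max (ub A) NA" "max (ub B) NB" n]
  by (simp add: lmult_def)

lemma vanishes_above_lmult:
  assumes "vanishes_above A NA" "vanishes_above B NB"
  shows "vanishes_above (lmult A B) (NA + NB)"
  by (auto simp: vanishes_above_def lmult_bounded[OF assms])

definition pdo_term :: "(int \<Rightarrow> dpoly) \<Rightarrow> (int \<Rightarrow> dpoly) \<Rightarrow> int \<Rightarrow> int \<Rightarrow> int \<Rightarrow> dpoly" where
  "pdo_term P R n k l = rconst ((of_int k :: rat) gchoose (nat (k + l - n))) * P k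
     * (dx ^^ nat (k + l - n)) (R l)"

lemma dx_funpow_zero [simp]: "(dx ^^ m) 0 = 0"
  by (induction m) auto

lemma pdo_term_sum_extend:
  assumes "vanishes_above P NP" "vanishes_above R NR" "NP \<le> NP'" "NR \<le> NR'"
  shows "(\<Sum>k\<in>{n - NR..NP}. \<Sum>l\<in>{n - k..NR}. pdo_term P R n k l)
       = (\<Sum>k\<in>{n - NR'..NP'}. \<Sum>l\<in>{n - k..NR'}. pdo_term P R n k l)"
proof -
  have zero: "pdo_term P R n k l = 0" if "k > NP \<or> l > NR" for k l
    using that assms(1,2) by (auto simp: pdo_term_def vanishes_above_def)
  have "(\<Sum>k\<in>{n - NR..NP}. \<Sum>l\<in>{n - k..NR}. pdo_term P R n k l)
      = (\<Sum>k\<in>{n - NR..NP}. \<Sum>l\<in>{n - k..NR'}. pdo_term P R n k l)"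
    by (intro sum.cong refl sum.mono_neutral_left) (use assms(4) zero in auto)
  also have "\<dots> = (\<Sum>k\<in>{n - NR'..NP'}. \<Sum>l\<in>{n - k..NR'}. pdo_term P R n k l)"
  proof (rule sum.mono_neutral_left)
    show "\<forall>k\<in>{n - NR'..NP'} - {n - NR..NP}. (\<Sum>l\<in>{n - k..NR'}. pdo_term P R n k l) = 0"
      using zero by (force intro!: sum.neutral)
  qed (use assms in auto)
  finally show ?thesis .
qed

lemma pdo_mult_bounded:
  assumes "vanishes_above P NP" "vanishes_above R NR"
  shows "pdo_mult P R n = (\<Sum>k\<in>{n - NR..NP}. \<Sum>l\<in>{n - k..NR}. pdo_term P R n k l)"
  using pdo_term_sum_extend[OF vanishes_above_ub[OF assms(1)] vanishes_above_ub[OF assms(2)],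
          of "max (ub P) NP" "max (ub R) NR" n]
        pdo_term_sum_extend[OF assms, of "max (ub P) NP" "max (ub R) NR" n]
  by (simp add: pdo_mult_def pdo_term_def)

lemma vanishes_above_pdo_mult:
  assumes "vanishes_above P NP" "vanishes_above R NR"
  shows "vanishes_above (pdo_mult P R) (NP + NR)"
  by (auto simp: vanishes_above_def pdo_mult_bounded[OF assms])

lemma pdo_mult_top:
  assumes "vanishes_above P NP" "vanishes_above R NR"
  shows "pdo_mult P R (NP + NR) = P NP * R NR"
  by (simp add: pdo_mult_bounded[OF assms] pdo_term_def)

lemma vanishes_above_lone: "vanishes_above lone 0"
  by (simp add: vanishes_above_def lone_def)

section \<open>The \<open>r\<close>-th root of \<open>L\<^sub>0\<close>\<close>

definition monic1 :: "(int \<Rightarrow> dpoly) \<Rightarrow> bool" where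
  "monic1 Q \<longleftrightarrow> Q 1 = 1 \<and> (\<forall>n>1. Q n = 0)"

lemma vanishes_above_monic1: "monic1 Q \<Longrightarrow> vanishes_above Q 1"
  by (simp add: monic1_def vanishes_above_def)

lemma pdo_pow_monic1:
  assumes "monic1 Q"
  shows "vanishes_above (pdo_pow Q j) (int j) \<and> pdo_pow Q j (int j) = 1"
proof (induction j)
  case 0
  then show ?case
    by (simp add: lone_def vanishes_above_def)
next
  case (Suc j)
  then show ?case
    using vanishes_above_pdo_mult[of _ "int j", OF _ vanishes_above_monic1[OF assms]]
          pdo_mult_top[of _ "int j", OF _ vanishes_above_monic1[OF assms]] assms
    by (simp add: monic1_def add.commute)
qed

lemma sum_sum_delta:
  assumes "finite K" "\<And>k. finite (L k)" "k0 \<in> K" "l0 \<in> L k0"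
  shows "(\<Sum>k\<in>K. \<Sum>l\<in>L k. if k = k0 \<and> l = l0 then c else 0) = c"
proof -
  have "(\<Sum>k\<in>K. \<Sum>l\<in>L k. if k = k0 \<and> l = l0 then c else 0)
      = (\<Sum>k\<in>K. if k = k0 then (\<Sum>l\<in>L k. if l = l0 then c else 0) else 0)"
    by (rule sum.cong) auto
  also have "\<dots> = c"
    using assms by (simp add: sum.delta')
  finally show ?thesis .
qed

lemma pdo_term_perturb:
  assumes "A (int j) = 1" "A' (int j) = 1" "monic1 Q" "monic1 Q'"
    and agree_A: "\<forall>i > N - 1. A i = A' i" and agree_Q: "\<forall>i > N - int j. Q i = Q' i"
    and "N \<le> int j" and k: "k \<in> {N - 1..int j}" and l: "l \<in> {N - k..1}"
  shows "pdo_term A Q N k l - pdo_term A' Q' N k l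
      = (if k = N - 1 \<and> l = 1 then A (N - 1) - A' (N - 1) else 0)
        + (if k = int j \<and> l = N - int j then Q (N - int j) - Q' (N - int j) else 0)"
proof -
  consider "k = N - 1" | "k \<noteq> N - 1" "l = N - int j" | "k > N - 1" "l > N - int j"
    using k l by fastforce
  then show ?thesis
  proof cases
    case 1
    then show ?thesis
      using l assms(3,4,7) by (simp add: pdo_term_def monic1_def)
  next
    case 2
    then have "k = int j"
      using k l by auto
    then show ?thesis
      using assms(1,2) 2(1) by (simp add: pdo_term_def 2(2))
  next
    case 3
    then show ?thesis
      using agree_A agree_Q by (simp add: pdo_term_def)
  qed
qed

text \<open>Only the leading coefficients \<open>1\<close> of the factors meet the first discrepancies, so
  these simply add up.\<close>
lemma pdo_mult_monic1_perturb:
  assumes A: "vanishes_above A (int j)" "A (int j) = 1" and A': "vanishes_above A' (int j)" "A' (int j) = 1"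
    and Q: "monic1 Q" "monic1 Q'"
    and agree_A: "\<forall>i > N - 1. A i = A' i" and agree_Q: "\<forall>i > N - int j. Q i = Q' i"
    and N: "N \<le> int j"
  shows "(\<forall>i > N. pdo_mult A Q i = pdo_mult A' Q' i)
       \<and> pdo_mult A Q N - pdo_mult A' Q' N = (A (N - 1) - A' (N - 1)) + (Q (N - int j) - Q' (N - int j))"
proof -
  have P: "pdo_mult A Q i = (\<Sum>k\<in>{i - 1..int j}. \<Sum>l\<in>{i - k..1}. pdo_term A Q i k l)"
    and P': "pdo_mult A' Q' i = (\<Sum>k\<in>{i - 1..int j}. \<Sum>l\<in>{i - k..1}. pdo_term A' Q' i k l)" for i
    using pdo_mult_bounded[OF A(1) vanishes_above_monic1[OF Q(1)]]
          pdo_mult_bounded[OF A'(1) vanishes_above_monic1[OF Q(2)]] by auto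
  have agree: "pdo_mult A Q i = pdo_mult A' Q' i" if "i > N" for i
    unfolding P P' using that agree_A agree_Q by (intro sum.cong refl) (auto simp: pdo_term_def)
  have "pdo_mult A Q N - pdo_mult A' Q' N
      = (\<Sum>k\<in>{N - 1..int j}. \<Sum>l\<in>{N - k..1}.
          (if k = N - 1 \<and> l = 1 then A (N - 1) - A' (N - 1) else 0)
          + (if k = int j \<and> l = N - int j then Q (N - int j) - Q' (N - int j) else 0))"
    unfolding P P' sum_subtractf[symmetric]
    by (intro sum.cong refl pdo_term_perturb[OF A(2) A'(2) Q agree_A agree_Q N])
  also have "\<dots> = (A (N - 1) - A' (N - 1)) + (Q (N - int j) - Q' (N - int j))"
    unfolding sum.distrib using N by (subst (1 2) sum_sum_delta) auto
  finally show ?thesis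
    using agree by blast
qed

lemma pdo_pow_perturb:
  assumes "monic1 Q" "monic1 Q'" "\<forall>i > - int n. Q i = Q' i"
  shows "(\<forall>i > int j - int n - 1. pdo_pow Q j i = pdo_pow Q' j i)
       \<and> pdo_pow Q j (int j - int n - 1) - pdo_pow Q' j (int j - int n - 1)
          = of_nat j * (Q (- int n) - Q' (- int n))"
proof (induction j)
  case (Suc j)
  have step: "(\<forall>i > int j - int n. pdo_pow Q (Suc j) i = pdo_pow Q' (Suc j) i)
      \<and> pdo_pow Q (Suc j) (int j - int n) - pdo_pow Q' (Suc j) (int j - int n)
          = (pdo_pow Q j (int j - int n - 1) - pdo_pow Q' j (int j - int n - 1))
            + (Q (- int n) - Q' (- int n))"
    using pdo_mult_monic1_perturb[of "pdo_pow Q j" j "pdo_pow Q' j" Q Q' "int j - int n"]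
      pdo_pow_monic1[OF assms(1), of j] pdo_pow_monic1[OF assms(2), of j] assms Suc.IH
    by simp
  also have "(pdo_pow Q j (int j - int n - 1) - pdo_pow Q' j (int j - int n - 1))
            + (Q (- int n) - Q' (- int n)) = of_nat (Suc j) * (Q (- int n) - Q' (- int n))"
    using Suc.IH by (simp add: algebra_simps)
  finally show ?case
    by simp
qed simp

text \<open>Coefficient by coefficient, from the top down, each new coefficient of the root is
  forced: its \<open>r\<close>-fold contribution must cancel the current discrepancy with \<open>L\<^sub>0\<close>.\<close>
fun root_approx :: "nat \<Rightarrow> nat \<Rightarrow> int \<Rightarrow> dpoly" where
  "root_approx r 0 = (\<lambda>i. if i = 1 then 1 else 0)"
| "root_approx r (Suc n) = (root_approx r n)(- int n := root_approx r n (- int n)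
     + rconst (1 / of_nat r) * (L0 r (int r - int n - 1) - pdo_pow (root_approx r n) r (int r - int n - 1)))"

lemma monic1_root_approx: "monic1 (root_approx r n)"
  by (induction n) (auto simp: monic1_def)

lemma root_approx_pow:
  assumes "r > 0"
  shows "\<forall>i > int r - int n - 1. pdo_pow (root_approx r n) r i = L0 r i"
proof (induction n)
  case 0
  show ?case
    using pdo_pow_monic1[OF monic1_root_approx[of r 0], of r]
    by (auto simp: vanishes_above_def L0_def)
next
  case (Suc n)
  let ?Q = "root_approx r n" and ?Q' = "root_approx r (Suc n)" and ?N = "int r - int n - 1"
  have perturb: "(\<forall>i > ?N. pdo_pow ?Q' r i = pdo_pow ?Q r i)
      \<and> pdo_pow ?Q' r ?N - pdo_pow ?Q r ?N = of_nat r * (?Q' (- int n) - ?Q (- int n))"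
    by (rule pdo_pow_perturb[OF monic1_root_approx monic1_root_approx]) simp
  have "of_nat r * (?Q' (- int n) - ?Q (- int n)) = L0 r ?N - pdo_pow ?Q r ?N"
    using assms by (simp add: of_nat_dpoly mult.assoc[symmetric] rconst_mult)
  then have top: "pdo_pow ?Q' r ?N = L0 r ?N"
    using perturb by (simp add: algebra_simps)
  show ?case
  proof (intro allI impI)
    fix i
    assume "i > int r - int (Suc n) - 1"
    then consider "i = ?N" | "i > ?N"
      by linarith
    then show "pdo_pow ?Q' r i = L0 r i"
      using top perturb Suc.IH by cases auto
  qed
qed

lemma root_approx_stable: "\<forall>i > - int m. root_approx r (m + d) i = root_approx r m i"
  by (induction d) auto

definition root_series :: "nat \<Rightarrow> int \<Rightarrow> dpoly" where
  "root_series r i = root_approx r (nat (1 - i)) i"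

lemma root_series_agree: "\<forall>i > - int n. root_series r i = root_approx r n i"
proof (intro allI impI)
  fix i
  assume i: "i > - int n"
  define m where "m = nat (1 - i)"
  have "m \<le> n" "i > - int m"
    using i by (auto simp: m_def)
  then show "root_series r i = root_approx r n i"
    using root_approx_stable[of m r "n - m"] by (simp add: root_series_def m_def)
qed

lemma monic1_root_series: "monic1 (root_series r)"
  using monic1_root_approx[of r 0] root_series_agree[of 0 r] by (auto simp: monic1_def)

lemma root_series_pow:
  assumes "r > 0"
  shows "pdo_pow (root_series r) r = L0 r"
proof
  fix i
  define n where "n = nat (int r - i)"
  have "\<forall>i' > int r - int n - 1. pdo_pow (root_series r) r i' = pdo_pow (root_approx r n) r i'"
    using pdo_pow_perturb[OF monic1_root_series monic1_root_approx root_series_agree] by blast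
  then show "pdo_pow (root_series r) r i = L0 r i"
    using root_approx_pow[OF assms, of n] by (simp add: n_def)
qed

lemma root_unique:
  assumes "r > 0" "monic1 Q" "monic1 Q'" "pdo_pow Q r = pdo_pow Q' r"
  shows "Q = Q'"
proof -
  have "\<forall>i > - int n. Q i = Q' i" for n
  proof (induction n)
    case 0
    have "i = 1 \<or> i > 1" if "i > 0" for i :: int
      using that by linarith
    then show ?case
      using assms(2,3) unfolding monic1_def by force
  next
    case (Suc n)
    have "Q (- int n) = Q' (- int n)"
      using pdo_pow_perturb[OF assms(2,3) Suc.IH, of r] assms(1,4) by (auto simp: algebra_simps)
    moreover have "i = - int n \<or> i > - int n" if "i > - int (Suc n)" for i
      using that by linarith
    ultimately show ?case
      using Suc.IH by auto
  qed
  moreover have "i > - int (nat (1 - i))" for i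
    by linarith
  ultimately show ?thesis
    by blast
qed

lemma pdo_root_L0:
  assumes "r > 0"
  shows "monic1 (pdo_root r (L0 r)) \<and> pdo_pow (pdo_root r (L0 r)) r = L0 r"
proof -
  have unique: "\<exists>!Q. Q 1 = 1 \<and> (\<forall>n>1. Q n = 0) \<and> pdo_pow Q r = L0 r"
    using monic1_root_series[of r] root_series_pow[OF assms] root_unique[OF assms]
    unfolding monic1_def by metis
  show ?thesis
    using theI'[OF unique] unfolding pdo_root_def monic1_def by blast
qed

section \<open>Differential degrees 0 and 1 of operator products\<close>

definition dparts :: "nat \<Rightarrow> (int \<Rightarrow> dpoly) \<Rightarrow> int \<Rightarrow> dpoly" where
  "dparts d P = (\<lambda>n. dpart d (P n))"

lemma vanishes_above_dparts: "vanishes_above P N \<Longrightarrow> vanishes_above (dparts d P) N"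
  by (simp add: vanishes_above_def dparts_def)

lemma vanishes_above_dz: "vanishes_above P N \<Longrightarrow> vanishes_above (dz P) (N - 1)"
  by (simp add: vanishes_above_def dz_def)

lemma vanishes_above_dxs: "vanishes_above P N \<Longrightarrow> vanishes_above (dxs P) N"
  by (simp add: vanishes_above_def dxs_def)

text \<open>A term of the composition carrying \<open>m = k + l - n\<close> derivatives has no part of degree
  below \<open>m\<close>; hence only \<open>m = 0\<close> contributes in degree 0, and \<open>m \<le> 1\<close> in degree 1.\<close>
lemma dpart0_pdo_term:
  assumes "k + l \<ge> n"
  shows "dpart 0 (pdo_term P R n k l) = (if l = n - k then dpart 0 (P k) * dpart 0 (R l) else 0)"
proof (cases "l = n - k")
  case False
  then have "dpart 0 ((dx ^^ nat (k + l - n)) (R l)) = 0"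
    using assms by (intro dpart0_dx_funpow) auto
  then show ?thesis
    using False by (simp add: pdo_term_def dpart_rconst_mult dpart0_mult mult.assoc)
qed (simp add: pdo_term_def dpart0_mult)

lemma dpart1_pdo_term:
  assumes "k + l \<ge> n"
  shows "dpart 1 (pdo_term P R n k l)
       = (if l = n - k then dpart 0 (P k) * dpart 1 (R l) + dpart 1 (P k) * dpart 0 (R l) else 0)
       + (if l = n - k + 1 then rconst (of_int k) * dpart 0 (P k) * dx (dpart 0 (R l)) else 0)"
proof -
  consider "l = n - k" | "l = n - k + 1" | "nat (k + l - n) > 1"
    using assms by linarith
  then show ?thesis
  proof cases
    case 1
    then show ?thesis
      by (simp add: pdo_term_def dpart1_mult[unfolded One_nat_def])
  next
    case 2
    then have "nat (k + l - n) = 1"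
      by simp
    then show ?thesis
      using 2 by (simp add: pdo_term_def dpart_rconst_mult dpart1_mult[unfolded One_nat_def]
          dpart1_dx[unfolded One_nat_def] dpart0_dx mult.assoc)
  next
    case 3
    then show ?thesis
      by (auto simp: pdo_term_def dpart_rconst_mult dpart1_mult[unfolded One_nat_def]
          dpart1_dx_funpow[unfolded One_nat_def] dpart0_dx_funpow)
  qed
qed

lemma dparts0_pdo_mult:
  assumes "vanishes_above P NP" "vanishes_above R NR"
  shows "dparts 0 (pdo_mult P R) = lmult (dparts 0 P) (dparts 0 R)"
proof
  fix n
  have "dparts 0 (pdo_mult P R) n
      = (\<Sum>k\<in>{n - NR..NP}. \<Sum>l\<in>{n - k..NR}. if l = n - k then dpart 0 (P k) * dpart 0 (R (n - k)) else 0)"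
    unfolding dparts_def pdo_mult_bounded[OF assms] dpart_sum
    by (intro sum.cong refl) (auto simp: dpart0_pdo_term)
  also have "\<dots> = lmult (dparts 0 P) (dparts 0 R) n"
    unfolding lmult_bounded[OF vanishes_above_dparts[OF assms(1)] vanishes_above_dparts[OF assms(2)]]
    by (intro sum.cong refl) (auto simp: dparts_def sum.delta')
  finally show "dparts 0 (pdo_mult P R) n = lmult (dparts 0 P) (dparts 0 R) n" .
qed

lemma dparts1_pdo_mult:
  assumes "vanishes_above P NP" "vanishes_above R NR"
  shows "dparts 1 (pdo_mult P R) = (\<lambda>n. lmult (dparts 0 P) (dparts 1 R) n + lmult (dparts 1 P) (dparts 0 R) n
           + lmult (dz (dparts 0 P)) (dxs (dparts 0 R)) n)"
proof
  fix n
  define f where "f k = dpart 0 (P k) * dpart 1 (R (n - k)) + dpart 1 (P k) * dpart 0 (R (n - k))" for k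
  define g where "g k = rconst (of_int k) * dpart 0 (P k) * dx (dpart 0 (R (n - k + 1)))" for k
  have inner: "(\<Sum>l\<in>{n - k..NR}. dpart 1 (pdo_term P R n k l)) = f k + (if k > n - NR then g k else 0)"
    if "k \<in> {n - NR..NP}" for k
  proof -
    have "(\<Sum>l\<in>{n - k..NR}. dpart 1 (pdo_term P R n k l))
        = (\<Sum>l\<in>{n - k..NR}. (if l = n - k then f k else 0) + (if l = n - k + 1 then g k else 0))"
      by (intro sum.cong refl) (simp add: dpart1_pdo_term[unfolded One_nat_def] f_def g_def)
    also have "\<dots> = f k + (if k > n - NR then g k else 0)"
      using that by (simp add: sum.distrib sum.delta')
    finally show ?thesis .
  qed
  have "dparts 1 (pdo_mult P R) n = (\<Sum>k\<in>{n - NR..NP}. f k + (if k > n - NR then g k else 0))"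
    unfolding dparts_def pdo_mult_bounded[OF assms] dpart_sum by (rule sum.cong[OF refl inner])
  also have "\<dots> = (\<Sum>k\<in>{n - NR..NP}. f k) + (\<Sum>k\<in>{k\<in>{n - NR..NP}. k > n - NR}. g k)"
    by (simp only: sum.distrib sum.inter_filter[OF finite_atLeastAtMost_int])
  also have "{k\<in>{n - NR..NP}. k > n - NR} = {n - NR<..NP}"
    by auto
  also have "(\<Sum>k\<in>{n - NR..NP}. f k) = lmult (dparts 0 P) (dparts 1 R) n + lmult (dparts 1 P) (dparts 0 R) n"
    unfolding lmult_bounded[OF vanishes_above_dparts[OF assms(1)] vanishes_above_dparts[OF assms(2)]]
    by (simp add: f_def dparts_def sum.distrib)
  also have "(\<Sum>k\<in>{n - NR<..NP}. g k) = lmult (dz (dparts 0 P)) (dxs (dparts 0 R)) n"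
    unfolding lmult_bounded[OF vanishes_above_dz[OF vanishes_above_dparts[OF assms(1)]]
        vanishes_above_dxs[OF vanishes_above_dparts[OF assms(2)]]]
    by (rule sum.reindex_bij_witness[of _ "\<lambda>k. k + 1" "\<lambda>k. k - 1"])
       (auto simp: g_def dz_def dxs_def dparts_def of_int_dpoly diff_diff_eq2 diff_add_eq)
  finally show "dparts 1 (pdo_mult P R) n = lmult (dparts 0 P) (dparts 1 R) n + lmult (dparts 1 P) (dparts 0 R) n
           + lmult (dz (dparts 0 P)) (dxs (dparts 0 R)) n" .
qed

section \<open>Symbols as Laurent series\<close>

unbundle fps_syntax

text \<open>A symbol \<open>\<Sum> A n z\<^sup>n\<close> bounded above is stored as the Laurent series \<open>\<Sum> A (-n) w\<^sup>n\<close> in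
  \<open>w = z\<^sup>-\<^sup>1\<close>; symbol products become products of Laurent series.\<close>
definition to_fls :: "(int \<Rightarrow> dpoly) \<Rightarrow> dpoly fls" where
  "to_fls A = Abs_fls (\<lambda>n. A (- n))"

lemma to_fls_nth:
  assumes "vanishes_above A N"
  shows "to_fls A $$ n = A (- n)"
proof -
  have "\<forall>\<^sub>\<infinity>m. A (- (- int m)) = 0"
    unfolding MOST_nat using assms by (auto simp: vanishes_above_def intro!: exI[of _ "nat N"])
  then show ?thesis
    unfolding to_fls_def by simp
qed

lemma to_fls_inj:
  assumes "vanishes_above A NA" "vanishes_above B NB" "to_fls A = to_fls B"
  shows "A = B"
proof
  fix n
  show "A n = B n"
    using arg_cong[OF assms(3), of "\<lambda>F. F $$ (- n)"] by (simp add: to_fls_nth[OF assms(1)] to_fls_nth[OF assms(2)])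
qed

lemma fls_times_nth_bounds:
  fixes F G :: "'a::comm_ring_1 fls"
  assumes "\<forall>i<a. F $$ i = 0" "\<forall>i<b. G $$ i = 0"
  shows "(F * G) $$ n = (\<Sum>i\<in>{a..n - b}. F $$ i * G $$ (n - i))"
proof (cases "F = 0 \<or> G = 0")
  case False
  then have "a \<le> fls_subdegree F" "b \<le> fls_subdegree G"
    using assms fls_subdegree_geI by blast+
  then have "(\<Sum>i\<in>{fls_subdegree F..n - fls_subdegree G}. F $$ i * G $$ (n - i))
      = (\<Sum>i\<in>{a..n - b}. F $$ i * G $$ (n - i))"
    by (intro sum.mono_neutral_left) auto
  then show ?thesis
    by (simp add: fls_times_nth(2))
qed auto

lemma to_fls_lmult:
  assumes "vanishes_above A NA" "vanishes_above B NB"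
  shows "to_fls (lmult A B) = to_fls A * to_fls B"
proof (rule fls_eqI)
  fix n
  have "(to_fls A * to_fls B) $$ n = (\<Sum>i\<in>{- NA..n + NB}. A (- i) * B (i - n))"
    using assms by (subst fls_times_nth_bounds[of "- NA" _ "- NB"]) (auto simp: to_fls_nth vanishes_above_def)
  also have "\<dots> = (\<Sum>k\<in>{- n - NB..NA}. A k * B (- n - k))"
    by (rule sum.reindex_bij_witness[of _ uminus uminus]) auto
  also have "\<dots> = to_fls (lmult A B) $$ n"
    by (simp add: lmult_bounded[OF assms] to_fls_nth[OF vanishes_above_lmult[OF assms]])
  finally show "to_fls (lmult A B) $$ n = (to_fls A * to_fls B) $$ n" ..
qed

lemma to_fls_lone: "to_fls lone = 1"
  by (rule fls_eqI) (simp add: to_fls_nth[OF vanishes_above_lone] lone_def)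

lemma vanishes_above_add:
  fixes A B :: "int \<Rightarrow> 'a::monoid_add"
  shows "vanishes_above A NA \<Longrightarrow> vanishes_above B NB \<Longrightarrow> vanishes_above (\<lambda>n. A n + B n) (max NA NB)"
  by (auto simp: vanishes_above_def)

lemma to_fls_add:
  assumes "vanishes_above A NA" "vanishes_above B NB"
  shows "to_fls (\<lambda>n. A n + B n) = to_fls A + to_fls B"
  by (rule fls_eqI)
     (simp add: to_fls_nth[OF assms(1)] to_fls_nth[OF assms(2)] to_fls_nth[OF vanishes_above_add[OF assms]])

lemma vanishes_above_smul: "vanishes_above A NA \<Longrightarrow> vanishes_above (smul c A) NA"
  by (simp add: vanishes_above_def smul_def)

lemma to_fls_zero: "to_fls (\<lambda>n. 0) = 0"
  by (rule fls_eqI) (simp add: to_fls_nth vanishes_above_def)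

definition derivation :: "('a::ring \<Rightarrow> 'a) \<Rightarrow> bool" where
  "derivation D \<longleftrightarrow> (\<forall>F G. D (F * G) = D F * G + F * D G)"

lemma derivation_one:
  assumes "derivation D"
  shows "D (1 :: 'a::ring_1) = 0"
  using assms[unfolded derivation_def, rule_format, of 1 1] by simp

definition fls_dz :: "dpoly fls \<Rightarrow> dpoly fls" where
  "fls_dz F = - fls_shift (-2) (fls_deriv F)"

lemma derivation_fls_dz: "derivation fls_dz"
  unfolding derivation_def fls_dz_def by (simp add: fls_shifted_times_simps algebra_simps)

lemma to_fls_dz:
  assumes "vanishes_above A N"
  shows "to_fls (dz A) = fls_dz (to_fls A)"
  by (rule fls_eqI)
     (simp add: to_fls_nth[OF vanishes_above_dz[OF assms]] to_fls_nth[OF assms] dz_def fls_dz_def algebra_simps)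

definition fls_dx :: "dpoly fls \<Rightarrow> dpoly fls" where
  "fls_dx F = Abs_fls (\<lambda>n. dx (F $$ n))"

lemma fls_dx_nth: "fls_dx F $$ n = dx (F $$ n)"
proof -
  have "\<forall>\<^sub>\<infinity>m. dx (F $$ (- int m)) = 0"
    unfolding MOST_nat by (auto intro!: exI[of _ "nat (- fls_subdegree F)"])
  then show ?thesis
    unfolding fls_dx_def by simp
qed

lemma to_fls_dxs:
  assumes "vanishes_above A N"
  shows "to_fls (dxs A) = fls_dx (to_fls A)"
  by (rule fls_eqI) (simp add: fls_dx_nth to_fls_nth[OF assms] to_fls_nth[OF vanishes_above_dxs[OF assms]] dxs_def)

lemma derivation_fls_dx: "derivation fls_dx"
  unfolding derivation_def
proof (intro allI fls_eqI)
  fix F G :: "dpoly fls" and n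
  define a where "a = fls_subdegree F"
  define b where "b = fls_subdegree G"
  have F: "\<forall>i<a. F $$ i = 0" "\<forall>i<a. fls_dx F $$ i = 0"
    and G: "\<forall>i<b. G $$ i = 0" "\<forall>i<b. fls_dx G $$ i = 0"
    by (auto simp: a_def b_def fls_dx_nth)
  have "fls_dx (F * G) $$ n = dx (\<Sum>i\<in>{a..n - b}. F $$ i * G $$ (n - i))"
    by (simp add: fls_dx_nth fls_times_nth_bounds[OF F(1) G(1)])
  also have "\<dots> = (fls_dx F * G + F * fls_dx G) $$ n"
    by (simp add: dx_sum dx_mult fls_dx_nth sum.distrib fls_times_nth_bounds[OF F(2) G(1)]
        fls_times_nth_bounds[OF F(1) G(2)])
  finally show "fls_dx (F * G) $$ n = (fls_dx F * G + F * fls_dx G) $$ n" .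
qed

definition fls_rat :: "rat \<Rightarrow> dpoly fls" where
  "fls_rat c = fls_const (rconst c)"

lemma to_fls_smul:
  assumes "vanishes_above A NA"
  shows "to_fls (smul c A) = fls_rat c * to_fls A"
  by (rule fls_eqI) (simp add: to_fls_nth[OF assms] to_fls_nth[OF vanishes_above_smul[OF assms]] smul_def fls_rat_def)

lemma fls_rat_add: "fls_rat (a + b) = fls_rat a + fls_rat b"
  by (simp add: fls_rat_def rconst_add fls_plus_const)

lemma fls_rat_mult: "fls_rat (a * b) = fls_rat a * fls_rat b"
  by (simp add: fls_rat_def rconst_mult)

lemma fls_rat_one [simp]: "fls_rat 1 = 1"
  by (simp add: fls_rat_def)

lemma fls_rat_uminus: "fls_rat (- a) = - fls_rat a"
  by (simp add: fls_rat_def rconst_def single_uminus)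

lemma fls_rat_of_int: "fls_rat (of_int i) = of_int i"
  by (simp add: fls_rat_def fls_of_int of_int_dpoly)

section \<open>Rational powers of \<open>L\<^sub>0\<close>\<close>

text \<open>In \<open>w = z\<^sup>-\<^sup>1\<close> the symbol is \<open>L\<^sub>0 = w\<^sup>-\<^sup>r (1 + u)\<close> with \<open>u = L0_tail r\<close> of order \<open>\<ge> 1\<close>, and
  \<open>L\<^sub>0\<^bsup>e/r\<^esup> = w\<^sup>-\<^sup>e (1 + u)\<^bsup>e/r\<^esup>\<close>, the binomial series composed with \<open>u\<close>.\<close>
definition L0_tail :: "nat \<Rightarrow> dpoly fps" where
  "L0_tail r = Abs_fps (\<lambda>j. if j = 0 then 0 else L0 r (int r - int j))"

definition binomial_fps :: "rat \<Rightarrow> dpoly fps" where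
  "binomial_fps q = Abs_fps (\<lambda>k. rconst (q gchoose k))"

definition L0_pow :: "nat \<Rightarrow> int \<Rightarrow> dpoly fls" where
  "L0_pow r e = fls_shift e (fps_to_fls (binomial_fps (of_int e / of_nat r) oo L0_tail r))"

lemma binomial_fps_add: "binomial_fps p * binomial_fps q = binomial_fps (p + q)"
proof (rule fps_ext)
  fix n
  have "(binomial_fps p * binomial_fps q) $ n = rconst (\<Sum>i=0..n. (p gchoose i) * (q gchoose (n - i)))"
    by (simp add: fps_mult_nth binomial_fps_def rconst_sum rconst_mult)
  then show "(binomial_fps p * binomial_fps q) $ n = binomial_fps (p + q) $ n"
    by (simp add: gbinomial_Vandermonde binomial_fps_def)
qed

lemma binomial_fps_0: "binomial_fps 0 = 1"
  by (rule fps_ext) (simp add: binomial_fps_def gbinomial_0_left)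

lemma binomial_fps_1: "binomial_fps 1 = 1 + fps_X"
proof (rule fps_ext)
  fix n
  have "(1::rat) gchoose n = of_nat (1 choose n)"
    by (metis binomial_gbinomial of_nat_1)
  then show "binomial_fps 1 $ n = (1 + fps_X) $ n"
    by (cases n) (auto simp: binomial_fps_def binomial_eq_0)
qed

lemma L0_pow_add:
  assumes "r > 0"
  shows "L0_pow r e1 * L0_pow r e2 = L0_pow r (e1 + e2)"
proof -
  have "(of_int e1 / of_nat r + of_int e2 / of_nat r :: rat) = of_int (e1 + e2) / of_nat r"
    by (simp add: add_divide_distrib)
  then show ?thesis
    by (simp add: L0_pow_def fls_times_both_shifted_simp fls_times_fps_to_fls[symmetric]
        fps_compose_mult_distrib[symmetric] binomial_fps_add L0_tail_def)
qed

lemma L0_pow_0: "L0_pow r 0 = 1"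
  by (simp add: L0_pow_def binomial_fps_0)

lemma L0_pow_of_nat:
  assumes "r > 0"
  shows "L0_pow r (int k) = L0_pow r 1 ^ k"
proof (induction k)
  case (Suc k)
  have "L0_pow r (int (Suc k)) = L0_pow r (int k) * L0_pow r 1"
    using L0_pow_add[OF assms, of "int k" 1] by (simp add: add.commute)
  then show ?case
    using Suc by (simp add: mult.commute)
qed (simp add: L0_pow_0)

lemma vanishes_above_L0: "vanishes_above (L0 r) (int r)"
  by (simp add: vanishes_above_def L0_def)

lemma L0_pow_r:
  assumes "r > 0"
  shows "L0_pow r (int r) = to_fls (L0 r)"
proof (rule fls_eqI)
  fix j
  have "binomial_fps 1 oo L0_tail r = 1 + L0_tail r"
    by (simp add: binomial_fps_1 fps_compose_add_distrib L0_tail_def)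
  then have "L0_pow r (int r) $$ j = fps_to_fls (1 + L0_tail r) $$ (j + int r)"
    using assms by (simp add: L0_pow_def)
  also have "\<dots> = L0 r (- j)"
  proof -
    consider "j + int r < 0" | "j + int r = 0" | "nat (j + int r) > 0" "int r - int (nat (j + int r)) = - j"
      by linarith
    then show ?thesis
      by cases (auto simp: L0_def L0_tail_def)
  qed
  finally show "L0_pow r (int r) $$ j = to_fls (L0 r) $$ j"
    by (simp add: to_fls_nth[OF vanishes_above_L0])
qed

definition L0_tail_coeffs :: "nat \<Rightarrow> int \<Rightarrow> dpoly" where
  "L0_tail_coeffs r = (\<lambda>m. L0 r (m + int r) - lone m)"

lemma vanishes_above_L0_tail_coeffs: "vanishes_above (L0_tail_coeffs r) 0"
  by (simp add: vanishes_above_def L0_tail_coeffs_def L0_def lone_def)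

lemma to_fls_L0_tail_coeffs: "to_fls (L0_tail_coeffs r) = fps_to_fls (L0_tail r)"
proof (rule fls_eqI)
  fix j
  consider "j < 0" | "j = 0" | "nat j > 0" "int (nat j) = j"
    by linarith
  then show "to_fls (L0_tail_coeffs r) $$ j = fps_to_fls (L0_tail r) $$ j"
    unfolding to_fls_nth[OF vanishes_above_L0_tail_coeffs]
    by cases (auto simp: L0_tail_coeffs_def L0_def lone_def L0_tail_def)
qed

lemma lpow_L0_tail_coeffs:
  "vanishes_above (lpow (L0_tail_coeffs r) k) 0 \<and> to_fls (lpow (L0_tail_coeffs r) k) = fps_to_fls (L0_tail r ^ k)"
proof (induction k)
  case (Suc k)
  then show ?case
    using vanishes_above_lmult[OF _ vanishes_above_L0_tail_coeffs, of _ 0]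
          to_fls_lmult[OF _ vanishes_above_L0_tail_coeffs, of _ 0]
    by (simp add: to_fls_L0_tail_coeffs fls_times_fps_to_fls[symmetric] power_Suc2)
qed (simp add: vanishes_above_lone to_fls_lone)

lemma lau_rpow_L0:
  assumes "r > 0"
  shows "vanishes_above (lau_rpow r (of_int e / of_nat r) (L0 r)) e
       \<and> to_fls (lau_rpow r (of_int e / of_nat r) (L0 r)) = L0_pow r e"
proof -
  let ?q = "of_int e / of_nat r :: rat"
  have unfold: "lau_rpow r ?q (L0 r) n = (if n > e then 0
      else (\<Sum>k\<in>{0..nat (e - n)}. rconst (?q gchoose k) * lpow (L0_tail_coeffs r) k (n - e)))" for n
    using assms by (simp add: lau_rpow_def L0_tail_coeffs_def)
  have vanishes: "vanishes_above (lau_rpow r ?q (L0 r)) e"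
    by (simp add: vanishes_above_def unfold)
  have lpow: "lpow (L0_tail_coeffs r) k t = (L0_tail r ^ k) $ nat (- t)" if "t \<le> 0" for k t
    using arg_cong[OF conjunct2[OF lpow_L0_tail_coeffs], of "\<lambda>F. F $$ (- t)"] that
    by (simp add: to_fls_nth[OF conjunct1[OF lpow_L0_tail_coeffs]])
  have "to_fls (lau_rpow r ?q (L0 r)) = L0_pow r e"
    by (rule fls_eqI)
       (simp add: to_fls_nth[OF vanishes] unfold lpow L0_pow_def fps_compose_nth binomial_fps_def add.commute)
  with vanishes show ?thesis
    by simp
qed

section \<open>The parts of differential degree 0 and 1 of the powers of the root\<close>

lemma dparts_lone: "dparts 0 lone = lone" "dparts 1 lone = (\<lambda>n. 0)"
  by (simp_all add: fun_eq_iff dparts_def lone_def dpart_one)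

lemma dparts_L0: "dparts 0 (L0 r) = L0 r" "dparts 1 (L0 r) = (\<lambda>n. 0)"
  by (simp_all add: fun_eq_iff dparts_def L0_def dpart_one dpart_fvar0)

lemma to_fls_dparts0_pdo_pow:
  assumes "monic1 Q"
  shows "to_fls (dparts 0 (pdo_pow Q j)) = to_fls (dparts 0 Q) ^ j"
proof (induction j)
  case (Suc j)
  have "vanishes_above (pdo_pow Q j) (int j)" "vanishes_above Q 1"
    using pdo_pow_monic1[OF assms] vanishes_above_monic1[OF assms] by auto
  then show ?case
    using Suc by (simp add: dparts0_pdo_mult to_fls_lmult[OF vanishes_above_dparts vanishes_above_dparts]
        power_Suc2)
qed (simp add: dparts_lone to_fls_lone)

lemma fls_lead_times:
  fixes F G :: "'a::comm_ring_1 fls"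
  assumes "\<forall>i<a. F $$ i = 0" "F $$ a = 1" "\<forall>i<b. G $$ i = 0" "G $$ b = 1"
  shows "(\<forall>i<a + b. (F * G) $$ i = 0) \<and> (F * G) $$ (a + b) = 1"
  using assms by (simp add: fls_times_nth_bounds[OF assms(1,3)])

lemma fls_lead_power:
  fixes F :: "'a::comm_ring_1 fls"
  assumes "\<forall>i < a. F $$ i = 0" "F $$ a = 1"
  shows "(\<forall>i < of_nat p * a. (F ^ p) $$ i = 0) \<and> (F ^ p) $$ (of_nat p * a) = 1"
proof (induction p)
  case (Suc p)
  from fls_lead_times[OF conjunct1[OF Suc.IH] conjunct2[OF Suc.IH] assms]
  show ?case
    by (simp add: power_Suc2 algebra_simps)
qed simp

text \<open>If two Laurent series start with \<open>1\<close> in the same degree, their \<open>r\<close>-th powers determine them: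
  \<open>S\<^sup>r - P\<^sup>r = (S - P) * W\<close> where \<open>W = \<Sum> S\<^sup>p P\<^bsup>r-1-p\<^esup>\<close> has leading coefficient \<open>r \<noteq> 0\<close>.\<close>
lemma fls_root_unique:
  fixes S P :: "'a::{idom, ring_char_0} fls"
  assumes "r > 0" "\<forall>i<a. S $$ i = 0" "S $$ a = 1" "\<forall>i<a. P $$ i = 0" "P $$ a = 1" "S ^ r = P ^ r"
  shows "S = P"
proof -
  obtain n where n: "r = Suc n"
    using assms(1) by (cases r) auto
  define W where "W = (\<Sum>p<Suc n. S ^ p * P ^ (n - p))"
  have "(S - P) * W = 0"
    using assms(6) diff_power_eq_sum[of S n P] by (simp add: n W_def)
  have "(S ^ p * P ^ (n - p)) $$ (of_nat n * a) = 1" if "p < Suc n" for p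
    using fls_lead_times[OF fls_lead_power[OF assms(2,3), of p, THEN conjunct1]
        fls_lead_power[OF assms(2,3), of p, THEN conjunct2]
        fls_lead_power[OF assms(4,5), of "n - p", THEN conjunct1]
        fls_lead_power[OF assms(4,5), of "n - p", THEN conjunct2]] that
    by (simp add: of_nat_diff algebra_simps)
  then have "W $$ (of_nat n * a) = of_nat (Suc n)"
    unfolding W_def fls_nth_sum by simp
  then have "W \<noteq> 0"
    by (metis fls_zero_nth of_nat_neq_0)
  with \<open>(S - P) * W = 0\<close> show ?thesis
    by simp
qed

lemma L0_pow_1_lead: "(\<forall>i < -1. L0_pow r 1 $$ i = 0) \<and> L0_pow r 1 $$ (-1) = 1"
  by (simp add: L0_pow_def fps_compose_nth binomial_fps_def)

lemma dparts0_pdo_root: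
  assumes "r > 0" "monic1 Q" "pdo_pow Q r = L0 r"
  shows "to_fls (dparts 0 Q) = L0_pow r 1"
proof (rule fls_root_unique[OF assms(1)])
  show "\<forall>i < -1. to_fls (dparts 0 Q) $$ i = 0" "to_fls (dparts 0 Q) $$ (-1) = 1"
    using assms(2) unfolding to_fls_nth[OF vanishes_above_dparts[OF vanishes_above_monic1[OF assms(2)]]]
    by (simp_all add: dparts_def monic1_def dpart_one)
  show "\<forall>i < -1. L0_pow r 1 $$ i = 0" "L0_pow r 1 $$ (-1) = 1"
    using L0_pow_1_lead by auto
  show "to_fls (dparts 0 Q) ^ r = L0_pow r 1 ^ r"
    using assms by (simp add: to_fls_dparts0_pdo_pow[symmetric] dparts_L0 L0_pow_r L0_pow_of_nat[symmetric])
qed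

lemma derivation_power_nat:
  fixes D :: "'a::comm_ring_1 \<Rightarrow> 'a"
  assumes "derivation D" and mult: "\<And>a b. P (a + b) = P a * P b" and "P 0 = 1"
  shows "D (P (int k)) = of_nat k * P (int k - 1) * D (P 1)"
proof (induction k)
  case 0
  show ?case
    using derivation_one[OF assms(1)] assms(3) by simp
next
  case (Suc k)
  have "D (P (int (Suc k))) = D (P (int k)) * P 1 + P (int k) * D (P 1)"
    using assms(1) mult[of "int k" 1] by (simp add: derivation_def add.commute)
  also have "\<dots> = of_nat (Suc k) * P (int k) * D (P 1)"
    using Suc mult[of "int k - 1" 1] by (simp add: algebra_simps)
  finally show ?case
    by simp
qed

lemma derivation_power_int:
  fixes D :: "'a::comm_ring_1 \<Rightarrow> 'a"
  assumes "derivation D" and mult: "\<And>a b. P (a + b) = P a * P b" and "P 0 = 1"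
  shows "D (P e) = of_int e * P (e - 1) * D (P 1)"
proof (cases "e \<ge> 0")
  case True
  then show ?thesis
    using derivation_power_nat[OF assms, of "nat e"] by simp
next
  case False
  define k where "k = nat (- e)"
  have e: "e = - int k"
    using False by (simp add: k_def)
  have inv: "P e * P (int k) = 1"
    using assms(3) mult[of e "int k"] by (simp add: e)
  then have "D (P e * P (int k)) = 0"
    using derivation_one[OF assms(1)] by simp
  then have inv': "D (P e) * P (int k) = - (P e * D (P (int k)))"
    using assms(1) by (simp add: derivation_def eq_neg_iff_add_eq_0)
  have "D (P e) = D (P e) * (P e * P (int k))"
    by (simp add: inv)
  also have "\<dots> = (D (P e) * P (int k)) * P e"
    by (simp only: ac_simps)
  also have "\<dots> = - (P e * D (P (int k))) * P e"
    by (simp only: inv')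
  also have "\<dots> = - (of_nat k * (P e * P (int k - 1) * P e) * D (P 1))"
    by (simp add: derivation_power_nat[OF assms] algebra_simps)
  also have "\<dots> = of_int e * (P e * P (int k - 1) * P e) * D (P 1)"
    by (simp add: e)
  also have "P e * P (int k - 1) * P e = P (e + (int k - 1) + e)"
    by (simp only: mult)
  also have "e + (int k - 1) + e = e - 1"
    by (simp add: e)
  finally show ?thesis .
qed

lemma derivation_L0_pow:
  assumes "derivation D" "r > 0"
  shows "D (L0_pow r e) = of_int e * L0_pow r (e - 1) * D (L0_pow r 1)"
  by (rule derivation_power_int[OF assms(1)]) (simp_all add: L0_pow_add[OF assms(2)] L0_pow_0)

lemma to_fls_dparts1_pdo_mult:
  assumes "vanishes_above P NP" "vanishes_above R NR"
  shows "to_fls (dparts 1 (pdo_mult P R))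
       = to_fls (dparts 0 P) * to_fls (dparts 1 R) + to_fls (dparts 1 P) * to_fls (dparts 0 R)
         + fls_dz (to_fls (dparts 0 P)) * fls_dx (to_fls (dparts 0 R))"
proof -
  note P = vanishes_above_dparts[OF assms(1)] and R = vanishes_above_dparts[OF assms(2)]
  define l1 where "l1 = lmult (dparts 0 P) (dparts 1 R)"
  define l2 where "l2 = lmult (dparts 1 P) (dparts 0 R)"
  define l3 where "l3 = lmult (dz (dparts 0 P)) (dxs (dparts 0 R))"
  have l1: "vanishes_above l1 (NP + NR)" and l2: "vanishes_above l2 (NP + NR)"
    and l3: "vanishes_above l3 (NP - 1 + NR)"
    unfolding l1_def l2_def l3_def using P R by (auto intro: vanishes_above_lmult vanishes_above_dz vanishes_above_dxs)
  have "to_fls (dparts 1 (pdo_mult P R)) = to_fls l1 + to_fls l2 + to_fls l3"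
    unfolding dparts1_pdo_mult[OF assms] l1_def[symmetric] l2_def[symmetric] l3_def[symmetric]
    by (simp add: to_fls_add[OF vanishes_above_add[OF l1 l2] l3] to_fls_add[OF l1 l2])
  then show ?thesis
    unfolding l1_def l2_def l3_def to_fls_lmult[OF P R] to_fls_dz[OF P] to_fls_dxs[OF R]
      to_fls_lmult[OF vanishes_above_dz[OF P] vanishes_above_dxs[OF R]] .
qed

context
  fixes r :: nat and Q :: "int \<Rightarrow> dpoly"
  assumes r: "r > 0" and Q: "monic1 Q" "pdo_pow Q r = L0 r"
begin

lemma dparts1_pdo_pow_Suc:
  "to_fls (dparts 1 (pdo_pow Q (Suc j)))
     = L0_pow r (int j) * to_fls (dparts 1 Q) + to_fls (dparts 1 (pdo_pow Q j)) * L0_pow r 1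
       + fls_dz (L0_pow r (int j)) * fls_dx (L0_pow r 1)"
  using to_fls_dparts1_pdo_mult[OF conjunct1[OF pdo_pow_monic1[OF Q(1)]] vanishes_above_monic1[OF Q(1)], of j]
  by (simp add: to_fls_dparts0_pdo_pow[OF Q(1)] dparts0_pdo_root[OF r Q] L0_pow_of_nat[OF r])

lemma dparts1_pdo_pow:
  "to_fls (dparts 1 (pdo_pow Q j))
     = fls_rat (of_nat j) * L0_pow r (int j - 1) * to_fls (dparts 1 Q)
       + fls_rat (of_nat j * (of_nat j - 1) / 2) * L0_pow r (int j - 2)
         * (fls_dz (L0_pow r 1) * fls_dx (L0_pow r 1))"
proof (induction j)
  case 0
  show ?case
    unfolding pdo_pow.simps dparts_lone to_fls_zero by (simp add: fls_rat_def)
next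
  case (Suc j)
  let ?X = "to_fls (dparts 1 Q)" and ?P = "L0_pow r" and ?W = "fls_dz (L0_pow r 1) * fls_dx (L0_pow r 1)"
  have P: "?P (int j - 1) * ?P 1 = ?P (int j)" "?P (int j - 2) * ?P 1 = ?P (int j - 1)"
    by (simp_all add: L0_pow_add[OF r])
  have dz: "fls_dz (?P (int j)) = fls_rat (of_nat j) * ?P (int j - 1) * fls_dz (?P 1)"
    using derivation_L0_pow[OF derivation_fls_dz r, of "int j"] fls_rat_of_int[of "int j"] by simp
  have "to_fls (dparts 1 (pdo_pow Q (Suc j)))
      = (1 + fls_rat (of_nat j)) * ?P (int j) * ?X
        + (fls_rat (of_nat j * (of_nat j - 1) / 2) + fls_rat (of_nat j)) * ?P (int j - 1) * ?W"
    unfolding dparts1_pdo_pow_Suc Suc dz by (simp add: algebra_simps flip: P)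
  also have "1 + fls_rat (of_nat j) = fls_rat (of_nat (Suc j))"
    by (simp add: fls_rat_add)
  also have "fls_rat (of_nat j * (of_nat j - 1) / 2) + fls_rat (of_nat j)
      = fls_rat (of_nat (Suc j) * (of_nat (Suc j) - 1) / 2)"
    by (simp add: fls_rat_add[symmetric] field_simps)
  finally show ?case
    by simp
qed

text \<open>Since \<open>Q\<^sup>r = L\<^sub>0\<close> has no part of degree 1, \<open>Y\<^sub>r = 0\<close>, which determines \<open>Y\<^sub>1\<close>.\<close>
lemma dparts1_pdo_root:
  "to_fls (dparts 1 Q) = fls_rat ((1 - of_nat r) / 2) * L0_pow r (-1) * (fls_dz (L0_pow r 1) * fls_dx (L0_pow r 1))"
proof -
  let ?X = "to_fls (dparts 1 Q)" and ?P = "L0_pow r" and ?W = "fls_dz (L0_pow r 1) * fls_dx (L0_pow r 1)"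
  let ?c = "of_nat r * (of_nat r - 1) / 2 :: rat"
  have root: "fls_rat (of_nat r) * ?P (int r - 1) * ?X = - (fls_rat ?c * ?P (int r - 2) * ?W)"
    using dparts1_pdo_pow[of r] unfolding Q dparts_L0 to_fls_zero by (simp add: eq_neg_iff_add_eq_0)
  have "1 / of_nat r * ?c = - ((1 - of_nat r) / 2)"
    using r by (simp add: field_simps)
  then have coeff: "fls_rat (1 / of_nat r) * fls_rat ?c = - fls_rat ((1 - of_nat r) / 2)"
    by (simp only: fls_rat_mult[symmetric] fls_rat_uminus[symmetric])
  have "?X = (fls_rat (1 / of_nat r) * fls_rat (of_nat r)) * (?P (1 - int r) * ?P (int r - 1)) * ?X"
    using r by (simp add: L0_pow_add[OF r] L0_pow_0 flip: fls_rat_mult)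
  also have "\<dots> = fls_rat (1 / of_nat r) * ?P (1 - int r) * (fls_rat (of_nat r) * ?P (int r - 1) * ?X)"
    by (simp add: algebra_simps)
  also have "\<dots> = - ((fls_rat (1 / of_nat r) * fls_rat ?c) * (?P (1 - int r) * ?P (int r - 2)) * ?W)"
    unfolding root by (simp add: algebra_simps)
  also have "?P (1 - int r) * ?P (int r - 2) = ?P (-1)"
    by (simp add: L0_pow_add[OF r])
  finally show ?thesis
    unfolding coeff by simp
qed

lemma dparts1_pdo_pow_root:
  "to_fls (dparts 1 (pdo_pow Q a))
     = fls_rat (of_nat a * (of_nat a - of_nat r) / 2) * L0_pow r (int a - 2) * (fls_dz (L0_pow r 1) * fls_dx (L0_pow r 1))"
proof -
  let ?P = "L0_pow r" and ?W = "fls_dz (L0_pow r 1) * fls_dx (L0_pow r 1)"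
  have "of_nat a * ((1 - of_nat r) / 2) + of_nat a * (of_nat a - 1) / 2
      = (of_nat a * (of_nat a - of_nat r) / 2 :: rat)"
    by (simp add: field_simps)
  then have coeff: "fls_rat (of_nat a) * fls_rat ((1 - of_nat r) / 2) + fls_rat (of_nat a * (of_nat a - 1) / 2)
      = fls_rat (of_nat a * (of_nat a - of_nat r) / 2)"
    by (simp only: fls_rat_mult[symmetric] fls_rat_add[symmetric])
  have "to_fls (dparts 1 (pdo_pow Q a))
      = fls_rat (of_nat a) * fls_rat ((1 - of_nat r) / 2) * (?P (int a - 1) * ?P (-1)) * ?W
        + fls_rat (of_nat a * (of_nat a - 1) / 2) * ?P (int a - 2) * ?W"
    unfolding dparts1_pdo_pow dparts1_pdo_root by (simp add: algebra_simps)
  also have "?P (int a - 1) * ?P (-1) = ?P (int a - 2)"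
    by (simp add: L0_pow_add[OF r])
  finally show ?thesis
    unfolding coeff[symmetric] by (simp add: algebra_simps)
qed

end

context
  fixes r :: nat
  assumes r: "r > 0"
begin

lemma to_fls_dz_L0: "to_fls (dz (L0 r)) = fls_rat (of_nat r) * L0_pow r (int r - 1) * fls_dz (L0_pow r 1)"
  using to_fls_dz[OF vanishes_above_L0] L0_pow_r[OF r] derivation_L0_pow[OF derivation_fls_dz r, of "int r"]
    fls_rat_of_int[of "int r"] by simp

lemma to_fls_dxs_L0: "to_fls (dxs (L0 r)) = fls_rat (of_nat r) * L0_pow r (int r - 1) * fls_dx (L0_pow r 1)"
  using to_fls_dxs[OF vanishes_above_L0] L0_pow_r[OF r] derivation_L0_pow[OF derivation_fls_dx r, of "int r"]
    fls_rat_of_int[of "int r"] by simp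

lemma lau_rpow_L0_shifted:
  "vanishes_above (lau_rpow r (of_nat a / of_nat r - of_nat k) (L0 r)) (int a - int k * int r)
   \<and> to_fls (lau_rpow r (of_nat a / of_nat r - of_nat k) (L0 r)) = L0_pow r (int a - int k * int r)"
proof -
  have "(of_nat a / of_nat r - of_nat k :: rat) = of_int (int a - int k * int r) / of_nat r"
    using r by (simp add: field_simps)
  then show ?thesis
    using lau_rpow_L0[OF r, of "int a - int k * int r"] by simp
qed

lemma to_fls_rhs_first:
  fixes c :: rat and a :: nat
  defines "R \<equiv> smul c (lmult (lmult (lau_rpow r (of_nat a / of_nat r - 2) (L0 r)) (dz (L0 r))) (dxs (L0 r)))"
  shows "vanishes_above R (int a - 1)
    \<and> to_fls R = fls_rat (c * of_nat r ^ 2) * L0_pow r (int a - 2) * (fls_dz (L0_pow r 1) * fls_dx (L0_pow r 1))"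
proof -
  obtain L where L: "vanishes_above L (int a - 2 * int r)" "to_fls L = L0_pow r (int a - 2 * int r)"
    and L_def: "L = lau_rpow r (of_nat a / of_nat r - 2) (L0 r)"
    using lau_rpow_L0_shifted[of a 2] by (simp add: mult.commute)
  note LZ = vanishes_above_lmult[OF L(1) vanishes_above_dz[OF vanishes_above_L0]]
  have "vanishes_above R (int a - 2 * int r + (int r - 1) + int r)"
    unfolding R_def L_def[symmetric] by (intro vanishes_above_smul vanishes_above_lmult LZ vanishes_above_dxs vanishes_above_L0)
  moreover have "to_fls R = fls_rat c * (L0_pow r (int a - 2 * int r) * to_fls (dz (L0 r)) * to_fls (dxs (L0 r)))"
    unfolding R_def L_def[symmetric]
    by (simp add: to_fls_smul[OF vanishes_above_lmult[OF LZ vanishes_above_dxs[OF vanishes_above_L0]]]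
        to_fls_lmult[OF LZ vanishes_above_dxs[OF vanishes_above_L0]]
        to_fls_lmult[OF L(1) vanishes_above_dz[OF vanishes_above_L0]] L(2))
  moreover have "L0_pow r (int a - 2 * int r) * L0_pow r (int r - 1) * L0_pow r (int r - 1) = L0_pow r (int a - 2)"
    by (simp add: L0_pow_add[OF r])
  ultimately show ?thesis
    by (simp add: to_fls_dz_L0 to_fls_dxs_L0 fls_rat_mult power2_eq_square algebra_simps)
qed

lemma to_fls_rhs_second:
  fixes c :: rat and a :: nat
  defines "R \<equiv> smul c (lmult (dz (lau_rpow r (of_nat a / of_nat r - 1) (L0 r))) (dxs (L0 r)))"
  shows "vanishes_above R (int a - 1)
    \<and> to_fls R = fls_rat (c * (of_nat a - of_nat r) * of_nat r) * L0_pow r (int a - 2)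
        * (fls_dz (L0_pow r 1) * fls_dx (L0_pow r 1))"
proof -
  obtain L where L: "vanishes_above L (int a - int r)" "to_fls L = L0_pow r (int a - int r)"
    and L_def: "L = lau_rpow r (of_nat a / of_nat r - 1) (L0 r)"
    using lau_rpow_L0_shifted[of a 1] by simp
  note Z = vanishes_above_dz[OF L(1)] and X = vanishes_above_dxs[OF vanishes_above_L0]
  have vanish: "vanishes_above R (int a - int r - 1 + int r)"
    unfolding R_def L_def[symmetric] by (intro vanishes_above_smul vanishes_above_lmult Z X)
  have dz: "fls_dz (L0_pow r (int a - int r))
      = fls_rat (of_nat a - of_nat r) * L0_pow r (int a - int r - 1) * fls_dz (L0_pow r 1)"
    using derivation_L0_pow[OF derivation_fls_dz r, of "int a - int r"] fls_rat_of_int[of "int a - int r"]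
    by simp
  have "to_fls R = fls_rat c * (fls_dz (L0_pow r (int a - int r)) * to_fls (dxs (L0 r)))"
    unfolding R_def L_def[symmetric]
    by (simp add: to_fls_smul[OF vanishes_above_lmult[OF Z X]] to_fls_lmult[OF Z X] to_fls_dz[OF L(1)] L(2))
  also have "\<dots> = fls_rat c * fls_rat (of_nat a - of_nat r) * fls_rat (of_nat r)
      * (L0_pow r (int a - int r - 1) * L0_pow r (int r - 1)) * (fls_dz (L0_pow r 1) * fls_dx (L0_pow r 1))"
    unfolding dz to_fls_dxs_L0 by (simp add: algebra_simps)
  also have "L0_pow r (int a - int r - 1) * L0_pow r (int r - 1) = L0_pow r (int a - 2)"
    by (simp add: L0_pow_add[OF r])
  finally show ?thesis
    using vanish by (simp add: fls_rat_mult)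
qed

end

theorem mainTheorem5:
  fixes r a :: nat
  assumes "r \<ge> 2" and "a \<ge> 1"
  shows "(\<lambda>n. deg1 (pdo_pow (pdo_root r (L0 r)) a n))
           = smul (of_nat a * (of_nat a - of_nat r) / (2 * of_nat r ^ 2))
               (lmult (lmult (lau_rpow r (of_nat a / of_nat r - 2) (L0 r)) (dz (L0 r)))
                      (dxs (L0 r)))
       \<and> smul (of_nat a * (of_nat a - of_nat r) / (2 * of_nat r ^ 2))
               (lmult (lmult (lau_rpow r (of_nat a / of_nat r - 2) (L0 r)) (dz (L0 r)))
                      (dxs (L0 r)))
           = smul (of_nat a / (2 * of_nat r))
               (lmult (dz (lau_rpow r (of_nat a / of_nat r - 1) (L0 r))) (dxs (L0 r)))"
proof -
  have r: "r > 0"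
    using assms(1) by simp
  define Q where "Q = pdo_root r (L0 r)"
  have Q: "monic1 Q" "pdo_pow Q r = L0 r"
    using pdo_root_L0[OF r] by (auto simp: Q_def)
  let ?c1 = "of_nat a * (of_nat a - of_nat r) / (2 * of_nat r ^ 2) :: rat"
  let ?c2 = "of_nat a / (2 * of_nat r) :: rat"
  have "?c1 * of_nat r ^ 2 = of_nat a * (of_nat a - of_nat r) / 2"
    "?c2 * (of_nat a - of_nat r) * of_nat r = of_nat a * (of_nat a - of_nat r) / 2"
    using r by (simp_all add: field_simps power2_eq_square)
  note rhs = to_fls_rhs_first[OF r, of ?c1 a, unfolded this(1)] to_fls_rhs_second[OF r, of ?c2 a, unfolded this(2)]
  have lhs: "vanishes_above (dparts 1 (pdo_pow Q a)) (int a)"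
    using vanishes_above_dparts pdo_pow_monic1[OF Q(1)] by blast
  have "(\<lambda>n. deg1 (pdo_pow Q a n)) = dparts 1 (pdo_pow Q a)"
    by (simp add: dparts_def deg1_eq_dpart)
  then show ?thesis
    unfolding Q_def[symmetric]
    using to_fls_inj[OF lhs conjunct1[OF rhs(1)]] to_fls_inj[OF conjunct1[OF rhs(1)] conjunct1[OF rhs(2)]]
      dparts1_pdo_pow_root[OF r Q] rhs by simp
qed
end
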